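(* Let $D$ be an oriented graph whose missing graph is a vertex-disjoint union of paths, and let $ab$, $xy$, $zt$ be missing edges of $D$. If $xy$ loses to $ab$ and $zt$ loses to $ab$, then $\{x,y\}\cap\{z,t\}\neq\emptyset$.
   Context: All digraphs are finite oriented graphs. $N^+(v)$ is the out-neighborhood; $N^{++}(v)$ is the set of vertices $w\notin N^+(v)\cup\{v\}$ with $u\to w$ for some $u\in N^+(v)$. A missing edge is a pair of distinct non-adjacent vertices; the missing graph is formed by the missing edges. For missing edges $\{x,y\},\{a,b\}$, $\{x,y\}$ loses to $\{a,b\}$ if the endpoints can be labelled so that $x\to a$, $b\notin N^+(x)\cup N^{++}(x)$, $y\to b$, $a\notin N^+(y)\cup N^{++}(y)$. *)

theory Defs
  imports Main
begin

definition oriented_graph :: "'a set \<Rightarrow> ('a \<times> 'a) set \<Rightarrow> bool" where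
  "oriented_graph V A \<longleftrightarrow> finite V \<and> A \<subseteq> V \<times> V \<and>
     (\<forall>u. (u, u) \<notin> A) \<and> (\<forall>u v. (u, v) \<in> A \<longrightarrow> (v, u) \<notin> A)"

definition out_nbhd :: "('a \<times> 'a) set \<Rightarrow> 'a \<Rightarrow> 'a set" where
  "out_nbhd A v = {w. (v, w) \<in> A}"

definition second_out_nbhd :: "('a \<times> 'a) set \<Rightarrow> 'a \<Rightarrow> 'a set" where
  "second_out_nbhd A v =
     {w. w \<notin> out_nbhd A v \<and> w \<noteq> v \<and> (\<exists>u \<in> out_nbhd A v. (u, w) \<in> A)}"

definition missing :: "'a set \<Rightarrow> ('a \<times> 'a) set \<Rightarrow> 'a \<Rightarrow> 'a \<Rightarrow> bool" where
  "missing V A u v \<longleftrightarrow> u \<in> V \<and> v \<in> V \<and> u \<noteq> v \<and> (u, v) \<notin> A \<and> (v, u) \<notin> A"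

definition missing_graph_union_of_paths :: "'a set \<Rightarrow> ('a \<times> 'a) set \<Rightarrow> bool" where
  "missing_graph_union_of_paths V A \<longleftrightarrow>
     (\<exists>Ps :: 'a list set.
        (\<forall>p \<in> Ps. p \<noteq> [] \<and> distinct p) \<and>
        (\<forall>p \<in> Ps. \<forall>q \<in> Ps. p \<noteq> q \<longrightarrow> set p \<inter> set q = {}) \<and>
        \<Union> (set ` Ps) = V \<and>
        (\<forall>u v. missing V A u v \<longleftrightarrow>
           (\<exists>p \<in> Ps. \<exists>i. Suc i < length p \<and> {p ! i, p ! Suc i} = {u, v})))"

definition loses_to :: "('a \<times> 'a) set \<Rightarrow> 'a \<Rightarrow> 'a \<Rightarrow> 'a \<Rightarrow> 'a \<Rightarrow> bool" where
  "loses_to A x y a b \<longleftrightarrow>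
     (\<exists>x' y' a' b'. {x', y'} = {x, y} \<and> {a', b'} = {a, b} \<and>
        (x', a') \<in> A \<and> b' \<notin> out_nbhd A x' \<union> second_out_nbhd A x' \<and>
        (y', b') \<in> A \<and> a' \<notin> out_nbhd A y' \<union> second_out_nbhd A y')"

end

theory Submission
  imports Defs
begin

text \<open>Fix orientations so that \<open>x \<rightarrow> a\<close> and \<open>y \<rightarrow> b\<close> for both losing edges \<open>xy\<close> and \<open>zt\<close>.
  Then \<open>x\<close> and \<open>t\<close> are non-adjacent: an arc \<open>x \<rightarrow> t\<close> would put \<open>b\<close> into the first or second
  out-neighbourhood of \<open>x\<close>, and an arc \<open>t \<rightarrow> x\<close> would do the same for \<open>a\<close> and \<open>t\<close>. Symmetrically
  \<open>z\<close> and \<open>y\<close> are non-adjacent, so if the two edges were disjoint the missing graph would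
  contain the 4-cycle \<open>x y z t\<close>, which a disjoint union of paths does not.\<close>

definition loses_to_in_order :: "('a \<times> 'a) set \<Rightarrow> 'a \<Rightarrow> 'a \<Rightarrow> 'a \<Rightarrow> 'a \<Rightarrow> bool" where
  "loses_to_in_order A x y a b \<longleftrightarrow>
     (x, a) \<in> A \<and> b \<notin> out_nbhd A x \<union> second_out_nbhd A x \<and>
     (y, b) \<in> A \<and> a \<notin> out_nbhd A y \<union> second_out_nbhd A y"

lemma loses_to_in_order_swap: "loses_to_in_order A x y a b \<longleftrightarrow> loses_to_in_order A y x b a"
  unfolding loses_to_in_order_def by blast

lemma loses_to_obtain_in_order:
  assumes "loses_to A x y a b"
  obtains x' y' where "{x', y'} = {x, y}" "loses_to_in_order A x' y' a b"
proof -
  obtain x' y' a' b' where xy: "{x', y'} = {x, y}" and ab: "{a', b'} = {a, b}"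
    and l: "loses_to_in_order A x' y' a' b'"
    using assms unfolding loses_to_def loses_to_in_order_def by blast
  from ab consider "a' = a" "b' = b" | "a' = b" "b' = a" by (auto simp: doubleton_eq_iff)
  then show thesis
  proof cases
    case 1
    then show thesis using that xy l by blast
  next
    case 2
    then have "loses_to_in_order A y' x' a b" using l loses_to_in_order_swap by metis
    then show thesis using that xy by (metis insert_commute)
  qed
qed

lemma loses_to_in_order_cross_missing:
  assumes "oriented_graph V A" and "missing V A a b"
    and xy: "loses_to_in_order A x y a b" and zt: "loses_to_in_order A z t a b" and "x \<noteq> t"
  shows "missing V A x t"
proof -
  have xa: "(x, a) \<in> A" and tb: "(t, b) \<in> A"
    and b_far: "b \<notin> out_nbhd A x \<union> second_out_nbhd A x"
    and a_far: "a \<notin> out_nbhd A t \<union> second_out_nbhd A t"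
    using xy zt unfolding loses_to_in_order_def by auto
  have "b \<noteq> x" "a \<noteq> t" using xa tb \<open>missing V A a b\<close> unfolding missing_def by auto
  have "(x, t) \<notin> A"
  proof
    assume "(x, t) \<in> A"
    then have "b \<in> out_nbhd A x \<union> second_out_nbhd A x"
      using tb \<open>b \<noteq> x\<close> unfolding second_out_nbhd_def out_nbhd_def by auto
    with b_far show False ..
  qed
  moreover have "(t, x) \<notin> A"
  proof
    assume "(t, x) \<in> A"
    then have "a \<in> out_nbhd A t \<union> second_out_nbhd A t"
      using xa \<open>a \<noteq> t\<close> unfolding second_out_nbhd_def out_nbhd_def by auto
    with a_far show False ..
  qed
  moreover have "x \<in> V" "t \<in> V"
    using xa tb \<open>oriented_graph V A\<close> unfolding oriented_graph_def by auto
  ultimately show ?thesis using \<open>x \<noteq> t\<close> unfolding missing_def by auto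
qed

definition missing_path_decomposition :: "'a set \<Rightarrow> ('a \<times> 'a) set \<Rightarrow> 'a list set \<Rightarrow> bool" where
  "missing_path_decomposition V A Ps \<longleftrightarrow>
     (\<forall>p \<in> Ps. p \<noteq> [] \<and> distinct p) \<and>
     (\<forall>p \<in> Ps. \<forall>q \<in> Ps. p \<noteq> q \<longrightarrow> set p \<inter> set q = {}) \<and>
     \<Union> (set ` Ps) = V \<and>
     (\<forall>u v. missing V A u v \<longleftrightarrow>
        (\<exists>p \<in> Ps. \<exists>i. Suc i < length p \<and> {p ! i, p ! Suc i} = {u, v}))"

lemma missing_graph_union_of_paths_iff:
  "missing_graph_union_of_paths V A \<longleftrightarrow> (\<exists>Ps. missing_path_decomposition V A Ps)"
  unfolding missing_graph_union_of_paths_def missing_path_decomposition_def ..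

lemma missing_path_decomposition_edge:
  assumes "missing_path_decomposition V A Ps" and "missing V A u v"
  obtains p i where "p \<in> Ps" "Suc i < length p" "{p ! i, p ! Suc i} = {u, v}"
  using assms unfolding missing_path_decomposition_def by blast

lemma missing_path_decomposition_neighbour:
  assumes D: "missing_path_decomposition V A Ps"
    and p: "p \<in> Ps" "j < length p" and m: "missing V A (p ! j) v"
  obtains k where "k < length p" "v = p ! k" "k = Suc j \<or> j = Suc k"
proof -
  obtain q i where q: "q \<in> Ps" "Suc i < length q" "{q ! i, q ! Suc i} = {p ! j, v}"
    using missing_path_decomposition_edge[OF D m] .
  have "{q ! i, q ! Suc i} \<subseteq> set q" using q(2) by simp
  then have "p ! j \<in> set q" using q(3) by blast
  moreover have "p ! j \<in> set p" using p(2) by simp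
  ultimately have "q = p"
    using D q(1) p(1) unfolding missing_path_decomposition_def by blast
  have dp: "distinct p" using D p(1) unfolding missing_path_decomposition_def by blast
  from q(3) consider "p ! j = q ! i" "v = q ! Suc i" | "p ! j = q ! Suc i" "v = q ! i"
    by (auto simp: doubleton_eq_iff)
  then show thesis
  proof cases
    case 1
    then have "i = j" using nth_eq_iff_index_eq[OF dp] q(2) p(2) \<open>q = p\<close> by auto
    then show thesis using that 1 q(2) \<open>q = p\<close> by blast
  next
    case 2
    then have "Suc i = j" using nth_eq_iff_index_eq[OF dp] q(2) p(2) \<open>q = p\<close> by auto
    then show thesis using that[of i] 2 q(2) \<open>q = p\<close> by auto
  qed
qed

lemma missing_graph_union_of_paths_no_4_cycle:
  assumes "missing_graph_union_of_paths V A" and "distinct [x, y, z, t]"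
    and "missing V A x y" "missing V A y z" "missing V A z t" "missing V A t x"
  shows False
proof -
  obtain Ps where D: "missing_path_decomposition V A Ps"
    using assms(1) missing_graph_union_of_paths_iff by blast
  obtain p i where p: "p \<in> Ps" "Suc i < length p" "{p ! i, p ! Suc i} = {x, y}"
    using missing_path_decomposition_edge[OF D \<open>missing V A x y\<close>] .
  obtain ix where ix: "ix < length p" "x = p ! ix"
    using p(2,3) by (metis doubleton_eq_iff Suc_lessD)
  note step = missing_path_decomposition_neighbour[OF D p(1)]
  obtain iy where iy: "iy < length p" "y = p ! iy" "iy = Suc ix \<or> ix = Suc iy"
    using step[OF ix(1)] ix(2) \<open>missing V A x y\<close> by metis
  obtain iz where iz: "iz < length p" "z = p ! iz" "iz = Suc iy \<or> iy = Suc iz"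
    using step[OF iy(1)] iy(2) \<open>missing V A y z\<close> by metis
  obtain it where it: "it < length p" "t = p ! it" "it = Suc iz \<or> iz = Suc it"
    using step[OF iz(1)] iz(2) \<open>missing V A z t\<close> by metis
  obtain ix' where ix': "ix' < length p" "x = p ! ix'" "ix' = Suc it \<or> it = Suc ix'"
    using step[OF it(1)] it(2) \<open>missing V A t x\<close> by metis
  have "distinct p" using D p(1) unfolding missing_path_decomposition_def by blast
  then have "ix' = ix" using ix ix' nth_eq_iff_index_eq by metis
  moreover have "ix \<noteq> iz" "iy \<noteq> it" using assms(2) ix iy iz it by auto
  ultimately show False using iy(3) iz(3) it(3) ix'(3) by linarith
qed

theorem lemma4p2:
  fixes V :: "'a set" and A :: "('a \<times> 'a) set" and a b x y z t :: 'a
  assumes "oriented_graph V A"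
    and "missing_graph_union_of_paths V A"
    and "missing V A a b" and "missing V A x y" and "missing V A z t"
    and "loses_to A x y a b" and "loses_to A z t a b"
  shows "{x, y} \<inter> {z, t} \<noteq> {}"
proof
  assume disjoint: "{x, y} \<inter> {z, t} = {}"
  obtain x' y' where xy: "{x', y'} = {x, y}" "loses_to_in_order A x' y' a b"
    using loses_to_obtain_in_order[OF assms(6)] .
  obtain z' t' where zt: "{z', t'} = {z, t}" "loses_to_in_order A z' t' a b"
    using loses_to_obtain_in_order[OF assms(7)] .
  have missing_sym: "missing V A u v \<Longrightarrow> missing V A v u" for u v
    unfolding missing_def by auto
  have "missing V A x' y'" "missing V A z' t'"
    using xy(1) zt(1) assms(4,5) missing_sym by (metis doubleton_eq_iff)+
  moreover have distinct: "distinct [x', y', z', t']"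
    using xy(1) zt(1) disjoint \<open>missing V A x' y'\<close> \<open>missing V A z' t'\<close>
    unfolding missing_def by auto
  moreover have "missing V A x' t'" "missing V A z' y'"
    using loses_to_in_order_cross_missing[OF assms(1,3)] xy(2) zt(2) distinct by auto
  ultimately show False
    using missing_graph_union_of_paths_no_4_cycle[OF assms(2) distinct] missing_sym by blast
qed

end
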